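(* Let $p(z)$ be any polynomial of degree $n\ge1$ with complex coefficients, and let $m=20n$. Then $$\sup_{|z|\le1}|p'(z)|\le 2n\sup_{k\in\{1,\dots,m\}}\left|p\!\left(e^{2ik\pi/m}\right)\right|.$$ *)

theory Defs
  imports "HOL-Analysis.Analysis" "HOL-Computational_Algebra.Polynomial"
begin

end

theory Submission
  imports Defs "HOL-Complex_Analysis.Complex_Analysis"
    "HOL-Computational_Algebra.Fundamental_Theorem_Algebra"
begin

text \<open>
  Let \<open>\<parallel>p\<parallel>\<close> be the maximum of \<open>|p|\<close> on the unit circle. Bernstein's inequality
  \<open>|p'| \<le> n \<parallel>p\<parallel>\<close> on the closed disc makes \<open>p\<close> Lipschitz there with constant \<open>n \<parallel>p\<parallel>\<close>.
  Every point of the circle lies within arc length \<open>2\<pi>/m\<close> of an \<open>m\<close>-th root of unity,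
  so \<open>\<parallel>p\<parallel> \<le> M + 2\<pi> n \<parallel>p\<parallel>/m = M + \<pi> \<parallel>p\<parallel>/10\<close>, where \<open>M\<close> is the maximum over the roots
  of unity; hence \<open>\<parallel>p\<parallel> \<le> 2M\<close> and \<open>|p'| \<le> 2nM\<close>.

  For Bernstein's inequality, the maximum modulus principle applied to the reflected polynomial
  \<open>z\<^sup>n p(1/z)\<close> gives \<open>|p(z)| \<le> \<parallel>p\<parallel> |z|\<^sup>n\<close> for \<open>|z| \<ge> 1\<close>. So if \<open>|c| > \<parallel>p\<parallel>\<close>, the polynomial
  \<open>P = p - c z\<^sup>n\<close> has degree \<open>n\<close> and all its roots \<open>a\<close> in the open disc, whence
  \<open>Re (z P'(z) / P(z)) = \<Sum>\<^sub>a Re (z / (z - a)) > 0\<close> for \<open>|z| \<ge> 1\<close>. If \<open>|p'(z)| > n \<parallel>p\<parallel>\<close> at some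
  \<open>|z| = 1\<close>, the choice \<open>c = p'(z) / (n z\<^sup>n\<^sup>-\<^sup>1)\<close> gives \<open>P'(z) = 0\<close>, a contradiction.
\<close>

lemma Re_divide_diff_pos:
  fixes a z :: complex
  assumes "cmod a < cmod z"
  shows "Re (z / (z - a)) > 0"
proof -
  have za: "z - a \<noteq> 0" using assms by auto
  have "Re (z * cnj a) \<le> cmod z * cmod a"
    by (metis complex_Re_le_cmod complex_mod_cnj norm_mult)
  also have "\<dots> < cmod z * cmod z"
    using assms by (intro mult_strict_left_mono) auto
  also have "\<dots> = Re (z * cnj z)"
    by (simp add: complex_mult_cnj cmod_power2 flip: power2_eq_square)
  finally have "Re (z * cnj (z - a)) > 0" by (simp add: algebra_simps)
  moreover have "(Re (z - a))\<^sup>2 + (Im (z - a))\<^sup>2 > 0"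
    using za by (metis complex_eq_iff sum_power2_gt_zero_iff zero_complex.simps)
  ultimately show ?thesis by (simp add: Re_divide algebra_simps)
qed

lemma Re_logderiv_poly_pos:
  fixes P :: "complex poly"
  assumes "degree P \<ge> 1" and "\<And>a. poly P a = 0 \<Longrightarrow> cmod a < 1" and "cmod z \<ge> 1"
  shows "Re (z * poly (pderiv P) z / poly P z) > 0"
  using assms
proof (induction "degree P" arbitrary: P)
  case 0
  then show ?case by simp
next
  case (Suc d)
  have "\<not> constant (poly P)"
    using Suc.hyps(2) by (subst constant_degree) simp
  then obtain a where a: "poly P a = 0"
    using fundamental_theorem_of_algebra by blast
  then have a1: "cmod a < 1" using Suc.prems(2) by blast
  obtain Q where Q: "P = [:-a, 1:] * Q"
    using a poly_eq_0_iff_dvd by (metis dvdE)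
  have "Q \<noteq> 0" using Q Suc.hyps(2) by auto
  then have dQ: "degree Q = d"
    using Suc.hyps(2) unfolding Q by (subst (asm) degree_mult_eq) auto
  have za: "z - a \<noteq> 0" and Qz: "poly Q z \<noteq> 0"
    using a1 Suc.prems(2,3) Q by force+
  have dP: "poly (pderiv P) z = poly Q z + (z - a) * poly (pderiv Q) z"
    unfolding Q pderiv_mult by (simp add: pderiv_pCons algebra_simps)
  have split: "z * poly (pderiv P) z / poly P z
                 = z / (z - a) + z * poly (pderiv Q) z / poly Q z"
    using za Qz unfolding dP by (simp add: Q field_simps)
  have linear: "Re (z / (z - a)) > 0"
    using a1 Suc.prems(3) by (intro Re_divide_diff_pos) simp
  show ?case
  proof (cases "d = 0")
    case True
    then have "pderiv Q = 0" using dQ by (simp add: pderiv_eq_0_iff)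
    then show ?thesis using split linear by simp
  next
    case False
    have "\<And>b. poly Q b = 0 \<Longrightarrow> cmod b < 1" using Suc.prems(2) Q by auto
    then have "Re (z * poly (pderiv Q) z / poly Q z) > 0"
      using Suc.hyps(1)[of Q] dQ False Suc.prems(3) by simp
    then show ?thesis using split linear by simp
  qed
qed

definition circle_max :: "complex poly \<Rightarrow> real" where
  "circle_max p = (SUP w\<in>sphere 0 1. cmod (poly p w))"

lemma norm_poly_le_circle_max:
  assumes "cmod w = 1"
  shows "cmod (poly p w) \<le> circle_max p"
  unfolding circle_max_def
proof (rule cSUP_upper)
  have "compact ((\<lambda>w. cmod (poly p w)) ` sphere 0 1)"
    by (intro compact_continuous_image continuous_intros) simp
  then show "bdd_above ((\<lambda>w. cmod (poly p w)) ` sphere 0 1)"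
    by (intro bounded_imp_bdd_above compact_imp_bounded)
qed (use assms in simp)

lemma norm_poly_le_on_cball:
  fixes q :: "complex poly"
  assumes "\<And>w. cmod w = 1 \<Longrightarrow> cmod (poly q w) \<le> B" and "cmod z \<le> 1"
  shows "cmod (poly q z) \<le> B"
proof (rule maximum_modulus_frontier[where f = "poly q" and S = "cball 0 1"])
  show "poly q holomorphic_on interior (cball 0 1)" by (intro holomorphic_intros)
  show "continuous_on (closure (cball 0 1)) (poly q)" by (intro continuous_intros)
qed (use assms in auto)

lemma norm_reflect_poly_le_circle_max:
  assumes "cmod z \<le> 1"
  shows "cmod (poly (reflect_poly p) z) \<le> circle_max p"
proof (rule norm_poly_le_on_cball[OF _ assms])
  fix w :: complex
  assume w: "cmod w = 1"
  then have "w \<noteq> 0" by auto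
  with w have "cmod (poly (reflect_poly p) w) = cmod (poly p (inverse w))"
    by (auto simp: poly_reflect_poly_nz norm_mult norm_power)
  also have "\<dots> \<le> circle_max p"
    using w by (intro norm_poly_le_circle_max) (simp add: norm_inverse)
  finally show "cmod (poly (reflect_poly p) w) \<le> circle_max p" .
qed

lemma norm_lead_coeff_le_circle_max: "cmod (lead_coeff p) \<le> circle_max p"
  using norm_reflect_poly_le_circle_max[of 0 p] by (simp add: poly_0_coeff_0)

lemma circle_max_nonneg: "circle_max p \<ge> 0"
  using norm_poly_le_circle_max[of 1 p] by (rule order_trans[OF norm_ge_zero]) simp

lemma norm_poly_le_circle_max_outside:
  assumes "cmod z \<ge> 1"
  shows "cmod (poly p z) \<le> circle_max p * cmod z ^ degree p"
proof -
  have "z \<noteq> 0" using assms by auto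
  then have "poly p z = z ^ degree p * poly (reflect_poly p) (inverse z)"
    by (simp add: poly_reflect_poly_nz power_inverse field_simps)
  then have "cmod (poly p z) = cmod z ^ degree p * cmod (poly (reflect_poly p) (inverse z))"
    by (simp add: norm_mult norm_power)
  also have "\<dots> \<le> cmod z ^ degree p * circle_max p"
    using assms by (intro mult_left_mono norm_reflect_poly_le_circle_max)
                   (auto simp: norm_inverse inverse_le_1_iff)
  finally show ?thesis by (simp add: mult_ac)
qed

lemma degree_diff_monom_large:
  assumes "cmod c > circle_max p"
  shows "degree (p - monom c (degree p)) = degree p"
proof (rule antisym)
  show "degree (p - monom c (degree p)) \<le> degree p"
    by (intro degree_diff_le) (auto intro: degree_monom_le)
  have "coeff (p - monom c (degree p)) (degree p) = lead_coeff p - c"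
    by (simp add: coeff_monom)
  moreover have "lead_coeff p \<noteq> c"
    using assms norm_lead_coeff_le_circle_max[of p] by auto
  ultimately show "degree p \<le> degree (p - monom c (degree p))"
    by (intro le_degree) simp
qed

lemma roots_diff_monom_large:
  assumes "cmod c > circle_max p" and "poly (p - monom c (degree p)) a = 0"
  shows "cmod a < 1"
proof (rule ccontr)
  assume "\<not> cmod a < 1"
  then have a1: "cmod a \<ge> 1" by simp
  then have "cmod a > 0" by linarith
  have "poly p a = c * a ^ degree p"
    using assms(2) by (simp add: poly_monom)
  then have "cmod (poly p a) = cmod c * cmod a ^ degree p"
    by (simp add: norm_mult norm_power)
  also have "\<dots> > circle_max p * cmod a ^ degree p"
    using assms(1) \<open>cmod a > 0\<close> by (intro mult_strict_right_mono) simp_all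
  finally show False
    using norm_poly_le_circle_max_outside[OF a1, of p] by simp
qed

lemma bernstein_inequality_circle:
  assumes z: "cmod z = 1"
  shows "cmod (poly (pderiv p) z) \<le> degree p * circle_max p"
proof (cases "degree p = 0")
  case True
  then have "pderiv p = 0" by (simp add: pderiv_eq_0_iff)
  then show ?thesis using True by simp
next
  case False
  define n where "n = degree p"
  show ?thesis
  proof (rule ccontr)
    assume "\<not> ?thesis"
    then have big: "cmod (poly (pderiv p) z) > n * circle_max p"
      unfolding n_def by simp
    have "z \<noteq> 0" using z by auto
    define c where "c = poly (pderiv p) z / (of_nat n * z ^ (n - 1))"
    have c: "cmod c > circle_max p"
      using big z False unfolding c_def n_def by (simp add: norm_divide norm_mult norm_power field_simps)
    define P where "P = p - monom c n"
    have "poly (pderiv P) z = poly (pderiv p) z - c * of_nat n * z ^ (n - 1)"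
      unfolding P_def by (simp add: pderiv_diff pderiv_monom poly_monom mult_ac)
    also have "\<dots> = 0"
      unfolding c_def using \<open>z \<noteq> 0\<close> False n_def by (simp add: field_simps)
    finally have "poly (pderiv P) z = 0" .
    moreover have "Re (z * poly (pderiv P) z / poly P z) > 0"
    proof (rule Re_logderiv_poly_pos)
      show "degree P \<ge> 1"
        using degree_diff_monom_large[OF c] False unfolding P_def n_def by simp
      show "\<And>a. poly P a = 0 \<Longrightarrow> cmod a < 1"
        using roots_diff_monom_large[OF c] unfolding P_def n_def by blast
    qed (use z in simp)
    ultimately show False by simp
  qed
qed

lemma bernstein_inequality:
  assumes "cmod z \<le> 1"
  shows "cmod (poly (pderiv p) z) \<le> degree p * circle_max p"
  using bernstein_inequality_circle assms by (rule norm_poly_le_on_cball)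

lemma norm_poly_diff_le_on_cball:
  assumes "cmod x \<le> 1" and "cmod y \<le> 1"
  shows "cmod (poly p x - poly p y) \<le> degree p * circle_max p * cmod (x - y)"
proof (rule field_differentiable_bound[where S = "cball 0 1" and f' = "poly (pderiv p)"])
  show "\<And>z. z \<in> cball 0 1 \<Longrightarrow> (poly p has_field_derivative poly (pderiv p) z) (at z within cball 0 1)"
    by (rule has_field_derivative_at_within) simp
  show "\<And>z. z \<in> cball 0 1 \<Longrightarrow> cmod (poly (pderiv p) z) \<le> degree p * circle_max p"
    by (simp add: bernstein_inequality)
qed (use assms in auto)

lemma norm_exp_i_diff_le: "cmod (exp (\<i> * of_real x) - exp (\<i> * of_real y)) \<le> \<bar>x - y\<bar>"
proof -
  have "exp (\<i> * of_real x) - exp (\<i> * of_real y) = exp (\<i> * of_real y) * (exp (\<i> * of_real (x - y)) - 1)"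
    by (simp add: algebra_simps flip: exp_add)
  then have "cmod (exp (\<i> * of_real x) - exp (\<i> * of_real y)) = cmod (exp (\<i> * of_real (x - y)) - 1)"
    by (simp only: norm_mult norm_exp_i_times mult_1_left)
  also have "\<dots> = 2 * \<bar>sin ((x - y) / 2)\<bar>"
    by (rule dist_exp_i_1)
  also have "\<dots> \<le> \<bar>x - y\<bar>"
    using abs_sin_x_le_abs_x[of "(x - y) / 2"] by simp
  finally show ?thesis .
qed

lemma exists_root_of_unity_near:
  assumes w: "cmod w = 1" and m: "m \<ge> (1::nat)"
  shows "\<exists>k\<in>{1..m}. cmod (w - exp (2 * \<i> * of_nat k * of_real pi / of_nat m)) \<le> 2 * pi / m"
proof -
  define t where "t = Arg2pi w"
  have w_eq: "w = exp (\<i> * of_real t)"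
    using Arg2pi_eq[of w] w unfolding t_def by (simp add: mult.commute)
  define s where "s = t * m / (2 * pi)"
  have "0 \<le> s" "s < m"
    using Arg2pi_ge_0[of w] Arg2pi_lt_2pi[of w] m unfolding s_def t_def by (auto simp: field_simps)
  have "of_int \<lfloor>s\<rfloor> \<le> s" "s < of_int \<lfloor>s\<rfloor> + 1" and "0 \<le> \<lfloor>s\<rfloor>"
    using \<open>0 \<le> s\<close> by simp_all
  define k where "k = nat \<lfloor>s\<rfloor> + 1"
  have "real k = of_int \<lfloor>s\<rfloor> + 1"
    using \<open>0 \<le> \<lfloor>s\<rfloor>\<close> unfolding k_def by simp
  then have sk: "\<bar>s - k\<bar> \<le> 1" and "real k < real (m + 1)"
    using \<open>of_int \<lfloor>s\<rfloor> \<le> s\<close> \<open>s < of_int \<lfloor>s\<rfloor> + 1\<close> \<open>s < m\<close> by linarith+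
  then have k: "k \<in> {1..m}"
    unfolding of_nat_less_iff k_def by simp
  have "exp (2 * \<i> * of_nat k * of_real pi / of_nat m) = exp (\<i> * of_real (2 * pi * k / m))"
    by (simp add: mult_ac)
  then have "cmod (w - exp (2 * \<i> * of_nat k * of_real pi / of_nat m)) \<le> \<bar>t - 2 * pi * k / m\<bar>"
    unfolding w_eq by (simp only: norm_exp_i_diff_le)
  also have "\<bar>t - 2 * pi * k / m\<bar> = 2 * pi / m * \<bar>s - k\<bar>"
    using m unfolding s_def by (simp add: field_simps abs_mult[symmetric] abs_divide)
  also have "\<dots> \<le> 2 * pi / m"
    using sk by (intro mult_left_le) simp_all
  finally show ?thesis using k by blast
qed

lemma circle_max_le_roots_of_unity:
  assumes m: "m \<ge> 1"
    and M: "\<And>k. k \<in> {1..m} \<Longrightarrow> cmod (poly p (exp (2 * \<i> * of_nat k * of_real pi / of_nat m))) \<le> M"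
  shows "circle_max p \<le> M + 2 * pi * degree p / m * circle_max p"
  unfolding circle_max_def
proof (rule cSUP_least)
  fix w :: complex
  assume "w \<in> sphere 0 1"
  then have w: "cmod w = 1" by simp
  obtain k where k: "k \<in> {1..m}"
    and near: "cmod (w - exp (2 * \<i> * of_nat k * of_real pi / of_nat m)) \<le> 2 * pi / m"
    using exists_root_of_unity_near[OF w m] by blast
  define u where "u = exp (2 * \<i> * of_nat k * of_real pi / of_nat m)"
  have "u = exp (\<i> * of_real (2 * k * pi / m))"
    unfolding u_def by (simp add: mult_ac)
  then have u: "cmod u = 1" by simp
  have "cmod (poly p w) \<le> cmod (poly p u) + cmod (poly p w - poly p u)"
    by (metis norm_triangle_sub add.commute)
  also have "\<dots> \<le> M + degree p * circle_max p * (2 * pi / m)"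
  proof (rule add_mono)
    show "cmod (poly p u) \<le> M" unfolding u_def by (rule M[OF k])
    have "cmod (poly p w - poly p u) \<le> degree p * circle_max p * cmod (w - u)"
      using w u by (intro norm_poly_diff_le_on_cball) simp_all
    also have "\<dots> \<le> degree p * circle_max p * (2 * pi / m)"
      using near circle_max_nonneg unfolding u_def by (intro mult_left_mono) auto
    finally show "cmod (poly p w - poly p u) \<le> degree p * circle_max p * (2 * pi / m)" .
  qed
  finally show "cmod (poly p w) \<le> M + 2 * pi * degree p / m * (SUP w\<in>sphere 0 1. cmod (poly p w))"
    by (simp add: circle_max_def field_simps)
qed simp

theorem corollaryF3:
  fixes p :: "complex poly" and n m :: nat
  assumes "degree p = n" and "n \<ge> 1" and "m = 20 * n"
  shows "(SUP z\<in>cball 0 1. cmod (poly (pderiv p) z))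
           \<le> 2 * real n * (SUP k\<in>{1..m}. cmod (poly p (exp (2 * \<i> * of_nat k * of_real pi / of_nat m))))"
proof -
  define M where "M = (SUP k\<in>{1..m}. cmod (poly p (exp (2 * \<i> * of_nat k * of_real pi / of_nat m))))"
  have "\<And>k. k \<in> {1..m} \<Longrightarrow> cmod (poly p (exp (2 * \<i> * of_nat k * of_real pi / of_nat m))) \<le> M"
    unfolding M_def by (rule cSUP_upper) auto
  moreover have "m \<ge> 1" using assms by simp
  ultimately have "circle_max p \<le> M + 2 * pi * n / m * circle_max p"
    using circle_max_le_roots_of_unity assms(1) by blast
  moreover have "2 * pi * n / m * circle_max p \<le> 1 / 2 * circle_max p"
    using assms pi_less_4 circle_max_nonneg by (intro mult_right_mono) auto
  ultimately have "circle_max p \<le> 2 * M" by linarith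
  have "(SUP z\<in>cball 0 1. cmod (poly (pderiv p) z)) \<le> n * circle_max p"
    using assms(1) by (intro cSUP_least) (auto simp: bernstein_inequality)
  also have "\<dots> \<le> n * (2 * M)"
    using \<open>circle_max p \<le> 2 * M\<close> by (intro mult_left_mono) simp_all
  finally show ?thesis
    unfolding M_def by (simp add: mult_ac)
qed

end
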